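(* Let $f(x)=x^5+px^4+qx^3+rx^2+sx+t$ with real coefficients, and suppose $D=0$, $L_1=0$, $L_2\neq0$ and $D_2>0$ (so $f$ has two distinct real double roots and one real simple root). Then the simple root of $f$ is $C_3/L_2$, the two double roots are the roots of $L_2x^2-2C_{2,1}x+C_{2,0}$, and with $F_4=\dfrac{C_3^2}{L_2^2}+\dfrac{C_{2,0}}{L_2}-\dfrac{2C_3C_{2,1}}{L_2^2}$, $F_5=\dfrac{2C_3-2C_{2,1}}{L_2}$: (a) if $F_4>0$ and $F_5<0$: single $<$ double $<$ double; (b) if $F_4<0$: double $<$ single $<$ double; (c) if $F_4>0$ and $F_5>0$: double $<$ double $<$ single.
   Context: Let $\alpha_1,\dots,\alpha_5\in\mathbb{C}$ be the roots of $f$ listed with multiplicity. $D=\prod_{1\le i<j\le 5}(\alpha_i-\alpha_j)^2$ is the discriminant of $f$. $L_2=40qs-16p^2s-8rp^3+38rpq+3p^2q^2-12q^3-45r^2$. $L_1=-264ps^2r-12p^3tq^2+36r^3pq-124srpq^2+28srp^3q+260sptq-132p^2qrt+240pr^2t+234sqr^2+32p^4tr+48ptq^3-56sp^3t-80q^2rt+194qs^2p^2-600str-6q^3sp^2+2p^2q^2r^2-12sr^2p^2-54r^4+320s^3-8q^3r^2-8r^3p^3+250qt^2-176q^2s^2+24q^4s-36p^4s^2-100p^2t^2$. $D_2=24p^2q^4s-1100q^3rt+800p^3qst-1735p^2q^2rt-3p^2qr^2s+20pq^3rs-600p^2rst-1150pq^2st+5475pqr^2t-1380pqrs^2+1500qrst+6p^3qr^3+p^4q^2r^2-128p^6rt+660pq^4t-136p^5st-3p^4q^3s-236p^4qs^2+337p^2q^2s^2+48p^5q^2t-357p^3q^3t-12p^4r^2s-45pr^3s+60q^2r^2s-8p^2q^3r^2-500p^2qt^2-24pq^2r^3-1380p^3r^2t+408p^3rs^2-4p^5qrs+1028p^4qrt+11p^3q^2rs+36p^6s^2+100p^4t^2+9p^2r^4-48q^5s+16q^4r^2+160q^3s^2+625q^2t^2-3375r^3t+900r^2s^2$.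 $C_{2,1}=6sp^3+4q^2r-3pr^2-21spq+30sr+10p^2t-25tq-p^2rq$. $C_{2,0}=-16tp^3-75tr+3psr-4q^2s+55tpq+p^2sq$. $C_3=-34p^2rq+8rp^4+44spq-3p^3q^2-8sp^3+12pq^3+57pr^2-16q^2r+100tq-120sr-40p^2t$. *)

theory Defs
  imports "HOL-Computational_Algebra.Polynomial"
begin

definition quintic :: "real \<Rightarrow> real \<Rightarrow> real \<Rightarrow> real \<Rightarrow> real \<Rightarrow> real poly" where
  "quintic p q r s t = [:t, s, r, q, p, 1:]"

text \<open>Discriminant, defined via the complex roots listed with multiplicity:
  D = prod_{i<j} (alpha_i - alpha_j)^2, where f = prod_i (x - alpha_i) over C.
  (The value does not depend on the ordering of the roots.)\<close>
definition disc5 :: "real \<Rightarrow> real \<Rightarrow> real \<Rightarrow> real \<Rightarrow> real \<Rightarrow> complex" where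
  "disc5 p q r s t = (THE d. \<exists>al :: complex list. length al = 5 \<and>
      map_poly complex_of_real (quintic p q r s t) = (\<Prod>i<5. [:- al ! i, 1:]) \<and>
      d = (\<Prod>j<5. \<Prod>i<j. (al ! i - al ! j)^2))"

definition L2 :: "real \<Rightarrow> real \<Rightarrow> real \<Rightarrow> real \<Rightarrow> real \<Rightarrow> real" where
  "L2 p q r s t = 40*q*s-16*p^2*s-8*r*p^3+38*r*p*q+3*p^2*q^2-12*q^3-45*r^2"

definition L1 :: "real \<Rightarrow> real \<Rightarrow> real \<Rightarrow> real \<Rightarrow> real \<Rightarrow> real" where
  "L1 p q r s t = -264*p*s^2*r-12*p^3*t*q^2+36*r^3*p*q-124*s*r*p*q^2+28*s*r*p^3*q+260*s*p*t*q
    -132*p^2*q*r*t+240*p*r^2*t+234*s*q*r^2+32*p^4*t*r+48*p*t*q^3-56*s*p^3*t-80*q^2*r*t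
    +194*q*s^2*p^2-600*s*t*r-6*q^3*s*p^2+2*p^2*q^2*r^2-12*s*r^2*p^2-54*r^4+320*s^3
    -8*q^3*r^2-8*r^3*p^3+250*q*t^2-176*q^2*s^2+24*q^4*s-36*p^4*s^2-100*p^2*t^2"

definition D2 :: "real \<Rightarrow> real \<Rightarrow> real \<Rightarrow> real \<Rightarrow> real \<Rightarrow> real" where
  "D2 p q r s t = 24*p^2*q^4*s-1100*q^3*r*t+800*p^3*q*s*t-1735*p^2*q^2*r*t-3*p^2*q*r^2*s
    +20*p*q^3*r*s-600*p^2*r*s*t-1150*p*q^2*s*t+5475*p*q*r^2*t-1380*p*q*r*s^2+1500*q*r*s*t
    +6*p^3*q*r^3+p^4*q^2*r^2-128*p^6*r*t+660*p*q^4*t-136*p^5*s*t-3*p^4*q^3*s-236*p^4*q*s^2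
    +337*p^2*q^2*s^2+48*p^5*q^2*t-357*p^3*q^3*t-12*p^4*r^2*s-45*p*r^3*s+60*q^2*r^2*s
    -8*p^2*q^3*r^2-500*p^2*q*t^2-24*p*q^2*r^3-1380*p^3*r^2*t+408*p^3*r*s^2-4*p^5*q*r*s
    +1028*p^4*q*r*t+11*p^3*q^2*r*s+36*p^6*s^2+100*p^4*t^2+9*p^2*r^4-48*q^5*s+16*q^4*r^2
    +160*q^3*s^2+625*q^2*t^2-3375*r^3*t+900*r^2*s^2"

definition C21 :: "real \<Rightarrow> real \<Rightarrow> real \<Rightarrow> real \<Rightarrow> real \<Rightarrow> real" where
  "C21 p q r s t = 6*s*p^3+4*q^2*r-3*p*r^2-21*s*p*q+30*s*r+10*p^2*t-25*t*q-p^2*r*q"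

definition C20 :: "real \<Rightarrow> real \<Rightarrow> real \<Rightarrow> real \<Rightarrow> real \<Rightarrow> real" where
  "C20 p q r s t = -16*t*p^3-75*t*r+3*p*s*r-4*q^2*s+55*t*p*q+p^2*s*q"

definition C3 :: "real \<Rightarrow> real \<Rightarrow> real \<Rightarrow> real \<Rightarrow> real \<Rightarrow> real" where
  "C3 p q r s t = -34*p^2*r*q+8*r*p^4+44*s*p*q-3*p^3*q^2-8*s*p^3+12*p*q^3+57*p*r^2
    -16*q^2*r+100*t*q-120*s*r-40*p^2*t"

end

(*
  Over the complex numbers f splits, and D = 0 forces a repeated root:
  f = (x - a)^2 (x - b) (x - c) (x - e). On quintics of this shape L1 equals
  2 ((a-b)(a-c)(a-e)(b-c)(b-e)(c-e))^2, so L1 = 0 forces a second coincidence;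
  a triple root would make D2 vanish, hence f = (x - e) (x - a)^2 (x - b)^2.
  For this shape, with K = 4 ((a-b)(a-e)(b-e))^2, one has L2 = K, C3 = K e,
  2 C21 = K (a + b), C20 = K a b and 4 D2 = K^2 (a - b)^2. Thus e and a + b are
  real and (a - b)^2 = 4 D2 / L2^2 > 0, so a and b are real and distinct; finally
  F4 = (e - a)(e - b) and F5 = (e - a) + (e - b) locate e relative to a < b.
*)

theory Submission
  imports Defs "HOL-Computational_Algebra.Fundamental_Theorem_Algebra" "HOL-Combinatorics.Permutations"
begin

definition disc_of_roots :: "'a::comm_ring_1 list \<Rightarrow> 'a" where
  "disc_of_roots xs = (\<Prod>j<length xs. \<Prod>i<j. (xs ! i - xs ! j)^2)"

lemma prod_sq_diffs_permute:
  fixes x :: "nat \<Rightarrow> 'a::comm_ring_1"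
  assumes \<sigma>: "\<sigma> permutes {..<n}"
  shows "(\<Prod>j<n. \<Prod>i<j. (x (\<sigma> i) - x (\<sigma> j))^2) = (\<Prod>j<n. \<Prod>i<j. (x i - x j)^2)"
proof -
  let ?T = "Sigma {..<n} (\<lambda>j. {..<j})"
  define h where "h = (\<lambda>(j, i). (max (\<sigma> j) (\<sigma> i), min (\<sigma> j) (\<sigma> i)))"
  define g where "g = (\<lambda>(j, i). (x i - x j)^2)"
  have "inj \<sigma>" using \<sigma> by (rule permutes_inj)
  have h_pair: "{fst (h (j, i)), snd (h (j, i))} = \<sigma> ` {j, i}" for j i
    by (auto simp: h_def max_def min_def)
  have "inj_on h ?T"
  proof (rule inj_onI)
    fix y y' assume "y \<in> ?T" "y' \<in> ?T" "h y = h y'"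
    then obtain j i j' i' where "y = (j, i)" "i < j" "y' = (j', i')" "i' < j'"
      and "\<sigma> ` {j, i} = \<sigma> ` {j', i'}" by (metis SigmaE lessThan_iff h_pair)
    then show "y = y'" using \<open>inj \<sigma>\<close> by (auto simp: inj_image_eq_iff doubleton_eq_iff inj_eq)
  qed
  moreover have "h y \<in> ?T" if "y \<in> ?T" for y
  proof -
    obtain j i where "y = (j, i)" "j < n" "i < j" using \<open>y \<in> ?T\<close> by auto
    then have "\<sigma> i \<noteq> \<sigma> j" "\<sigma> i < n" "\<sigma> j < n"
      using \<open>inj \<sigma>\<close> permutes_in_image[OF \<sigma>] by (auto dest: injD)
    then show "h y \<in> ?T" using \<open>y = (j, i)\<close> by (auto simp: h_def)
  qed
  ultimately have bij: "bij_betw h ?T ?T"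
    by (simp add: bij_betw_def endo_inj_surj image_subsetI)
  have "(\<Prod>j<n. \<Prod>i<j. (x (\<sigma> i) - x (\<sigma> j))^2) = (\<Prod>y\<in>?T. g (h y))"
    by (subst prod.Sigma) (auto intro!: prod.cong simp: g_def h_def max_def min_def power2_commute)
  also have "\<dots> = (\<Prod>y\<in>?T. g y)"
    by (rule prod.reindex_bij_betw[OF bij])
  also have "\<dots> = (\<Prod>j<n. \<Prod>i<j. (x i - x j)^2)"
    by (subst prod.Sigma) (auto simp: g_def)
  finally show ?thesis .
qed

lemma disc_of_roots_permute_list:
  assumes "\<sigma> permutes {..<length xs}"
  shows "disc_of_roots (permute_list \<sigma> xs) = disc_of_roots xs"
proof -
  have "disc_of_roots (permute_list \<sigma> xs) = (\<Prod>j<length xs. \<Prod>i<j. (xs ! \<sigma> i - xs ! \<sigma> j)^2)"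
    unfolding disc_of_roots_def using assms by (auto intro!: prod.cong simp: permute_list_nth)
  then show ?thesis
    unfolding disc_of_roots_def using prod_sq_diffs_permute[OF assms] by simp
qed

lemma disc_of_roots_eq_0_iff:
  fixes xs :: "'a::idom list"
  shows "disc_of_roots xs = 0 \<longleftrightarrow> \<not> distinct xs"
proof -
  have "disc_of_roots xs = 0 \<longleftrightarrow> (\<exists>j<length xs. \<exists>i<j. xs ! i = xs ! j)"
    by (simp add: disc_of_roots_def Bex_def)
  also have "\<dots> \<longleftrightarrow> \<not> distinct xs"
  proof
    assume "\<exists>j<length xs. \<exists>i<j. xs ! i = xs ! j"
    then show "\<not> distinct xs" by (metis distinct_conv_nth less_trans less_irrefl)
  next
    assume "\<not> distinct xs"
    then obtain i j where "i < length xs" "j < length xs" "i \<noteq> j" "xs ! i = xs ! j"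
      by (auto simp: distinct_conv_nth)
    then show "\<exists>j<length xs. \<exists>i<j. xs ! i = xs ! j" by (metis linorder_neqE_nat)
  qed
  finally show ?thesis .
qed

lemma proots_prod_list_linear:
  fixes xs :: "'a::idom list"
  shows "proots (\<Prod>x\<leftarrow>xs. [:-x, 1:]) = mset xs"
proof (induction xs)
  case (Cons x xs)
  have "(\<Prod>x\<leftarrow>xs. [:-x, 1:]) \<noteq> 0" by (auto simp: prod_list_zero_iff)
  then show ?case using Cons.IH by (simp add: proots_mult del: mult_pCons_left)
qed simp

lemma complex_poly_root_list:
  fixes F :: "complex poly"
  assumes "lead_coeff F = 1"
  obtains xs where "length xs = degree F" "F = (\<Prod>x\<leftarrow>xs. [:-x, 1:])"
proof -
  obtain xs where xs: "mset xs = proots F" using ex_mset by blast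
  show ?thesis
  proof (rule that)
    show "length xs = degree F" by (metis xs size_mset size_proots_complex)
    show "F = (\<Prod>x\<leftarrow>xs. [:-x, 1:])"
      using complex_poly_decompose_multiset[of F] assms
      by (simp add: xs[symmetric] prod_mset_prod_list flip: mset_map)
  qed
qed

lemma map_poly_quintic:
  "map_poly complex_of_real (quintic p q r s t) =
     [:of_real t, of_real s, of_real r, of_real q, of_real p, 1:]"
  by (simp add: quintic_def map_poly_pCons)

(* Any two root lists are permutations of each other, so the description in disc5 is unique. *)
lemma disc5_eq_disc_of_roots:
  assumes "length xs = 5" "map_poly complex_of_real (quintic p q r s t) = (\<Prod>x\<leftarrow>xs. [:-x, 1:])"
  shows "disc5 p q r s t = disc_of_roots xs"
  unfolding disc5_def
proof (rule the_equality)
  have prod_nth: "(\<Prod>i<length ys. [:- ys ! i, 1:]) = (\<Prod>y\<leftarrow>ys. [:-y, 1:])" for ys :: "complex list"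
    by (simp add: prod.list_conv_set_nth atLeast0LessThan)
  show "\<exists>al. length al = 5 \<and> map_poly complex_of_real (quintic p q r s t) = (\<Prod>i<5. [:- al ! i, 1:])
          \<and> disc_of_roots xs = (\<Prod>j<5. \<Prod>i<j. (al ! i - al ! j)^2)"
    using assms prod_nth[of xs] by (intro exI[of _ xs]) (simp add: disc_of_roots_def)
  fix d assume "\<exists>al. length al = 5 \<and> map_poly complex_of_real (quintic p q r s t) = (\<Prod>i<5. [:- al ! i, 1:])
          \<and> d = (\<Prod>j<5. \<Prod>i<j. (al ! i - al ! j)^2)"
  then obtain ys where len: "length ys = 5"
    and F: "map_poly complex_of_real (quintic p q r s t) = (\<Prod>i<5. [:- ys ! i, 1:])"
    and d: "d = (\<Prod>j<5. \<Prod>i<j. (ys ! i - ys ! j)^2)" by blast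
  have ys: "(\<Prod>y\<leftarrow>ys. [:-y, 1:]) = (\<Prod>x\<leftarrow>xs. [:-x, 1:])"
    using F assms(2) prod_nth[of ys] len by simp
  have "mset ys = mset xs" using arg_cong[OF ys, of proots] by (simp add: proots_prod_list_linear)
  then obtain \<sigma> where "\<sigma> permutes {..<length xs}" "permute_list \<sigma> xs = ys"
    by (rule mset_eq_permutation)
  then have "disc_of_roots ys = disc_of_roots xs" using disc_of_roots_permute_list by blast
  then show "d = disc_of_roots xs" using d len by (simp add: disc_of_roots_def)
qed

lemma disc5_zero_double_root:
  assumes "disc5 p q r s t = 0"
  obtains a b c e :: complex where
    "[:of_real t, of_real s, of_real r, of_real q, of_real p, 1:] = [:-a, 1:]^2 * [:-b, 1:] * [:-c, 1:] * [:-e, 1:]"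
proof -
  let ?F = "map_poly complex_of_real (quintic p q r s t)"
  have "lead_coeff ?F = 1" "degree ?F = 5" by (simp_all add: map_poly_quintic numeral_eq_Suc)
  then obtain xs where "length xs = 5" and F: "?F = (\<Prod>x\<leftarrow>xs. [:-x, 1:])"
    by (metis complex_poly_root_list)
  then have "\<not> distinct xs"
    using assms disc5_eq_disc_of_roots disc_of_roots_eq_0_iff by metis
  then obtain us vs ws a where xs: "xs = us @ [a] @ vs @ [a] @ ws"
    using not_distinct_decomp by blast
  define zs where "zs = us @ vs @ ws"
  have "length zs = 3" using \<open>length xs = 5\<close> by (simp add: xs zs_def)
  then obtain b c e where "zs = [b, c, e]" by (auto simp: numeral_3_eq_3 length_Suc_conv)
  then have "mset (us @ vs @ ws) = mset [b, c, e]" by (simp add: zs_def)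
  then have "mset xs = mset [a, a, b, c, e]" by (simp add: xs)
  then have "?F = (\<Prod>x\<leftarrow>[a, a, b, c, e]. [:-x, 1:])"
    unfolding F by (simp only: prod_mset_prod_list[symmetric] mset_map)
  also have "\<dots> = [:-a, 1:]^2 * [:-b, 1:] * [:-c, 1:] * [:-e, 1:]"
    by (simp only: list.map prod_list.Cons prod_list.Nil power2_eq_square mult_1_right mult.assoc)
  finally show ?thesis by (intro that[of a b c e]) (simp only: map_poly_quintic)
qed

(* Ring-generic copies of the invariants, so that they can be evaluated at complex roots. *)
definition L1_gen :: "'a::comm_ring_1 \<Rightarrow> 'a \<Rightarrow> 'a \<Rightarrow> 'a \<Rightarrow> 'a \<Rightarrow> 'a" where
  "L1_gen p q r s t = -264*p*s^2*r-12*p^3*t*q^2+36*r^3*p*q-124*s*r*p*q^2+28*s*r*p^3*q+260*s*p*t*q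
    -132*p^2*q*r*t+240*p*r^2*t+234*s*q*r^2+32*p^4*t*r+48*p*t*q^3-56*s*p^3*t-80*q^2*r*t
    +194*q*s^2*p^2-600*s*t*r-6*q^3*s*p^2+2*p^2*q^2*r^2-12*s*r^2*p^2-54*r^4+320*s^3
    -8*q^3*r^2-8*r^3*p^3+250*q*t^2-176*q^2*s^2+24*q^4*s-36*p^4*s^2-100*p^2*t^2"

definition L2_gen :: "'a::comm_ring_1 \<Rightarrow> 'a \<Rightarrow> 'a \<Rightarrow> 'a \<Rightarrow> 'a \<Rightarrow> 'a" where
  "L2_gen p q r s t = 40*q*s-16*p^2*s-8*r*p^3+38*r*p*q+3*p^2*q^2-12*q^3-45*r^2"

definition D2_gen :: "'a::comm_ring_1 \<Rightarrow> 'a \<Rightarrow> 'a \<Rightarrow> 'a \<Rightarrow> 'a \<Rightarrow> 'a" where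
  "D2_gen p q r s t = 24*p^2*q^4*s-1100*q^3*r*t+800*p^3*q*s*t-1735*p^2*q^2*r*t-3*p^2*q*r^2*s
    +20*p*q^3*r*s-600*p^2*r*s*t-1150*p*q^2*s*t+5475*p*q*r^2*t-1380*p*q*r*s^2+1500*q*r*s*t
    +6*p^3*q*r^3+p^4*q^2*r^2-128*p^6*r*t+660*p*q^4*t-136*p^5*s*t-3*p^4*q^3*s-236*p^4*q*s^2
    +337*p^2*q^2*s^2+48*p^5*q^2*t-357*p^3*q^3*t-12*p^4*r^2*s-45*p*r^3*s+60*q^2*r^2*s
    -8*p^2*q^3*r^2-500*p^2*q*t^2-24*p*q^2*r^3-1380*p^3*r^2*t+408*p^3*r*s^2-4*p^5*q*r*s
    +1028*p^4*q*r*t+11*p^3*q^2*r*s+36*p^6*s^2+100*p^4*t^2+9*p^2*r^4-48*q^5*s+16*q^4*r^2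
    +160*q^3*s^2+625*q^2*t^2-3375*r^3*t+900*r^2*s^2"

definition C21_gen :: "'a::comm_ring_1 \<Rightarrow> 'a \<Rightarrow> 'a \<Rightarrow> 'a \<Rightarrow> 'a \<Rightarrow> 'a" where
  "C21_gen p q r s t = 6*s*p^3+4*q^2*r-3*p*r^2-21*s*p*q+30*s*r+10*p^2*t-25*t*q-p^2*r*q"

definition C20_gen :: "'a::comm_ring_1 \<Rightarrow> 'a \<Rightarrow> 'a \<Rightarrow> 'a \<Rightarrow> 'a \<Rightarrow> 'a" where
  "C20_gen p q r s t = -16*t*p^3-75*t*r+3*p*s*r-4*q^2*s+55*t*p*q+p^2*s*q"

definition C3_gen :: "'a::comm_ring_1 \<Rightarrow> 'a \<Rightarrow> 'a \<Rightarrow> 'a \<Rightarrow> 'a \<Rightarrow> 'a" where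
  "C3_gen p q r s t = -34*p^2*r*q+8*r*p^4+44*s*p*q-3*p^3*q^2-8*s*p^3+12*p*q^3+57*p*r^2
    -16*q^2*r+100*t*q-120*s*r-40*p^2*t"

lemma of_real_invariants:
  fixes p q r s t :: real
  shows "of_real (L1 p q r s t) = (L1_gen (of_real p) (of_real q) (of_real r) (of_real s) (of_real t)
           :: 'a::{real_algebra_1,comm_ring_1})"
    and "of_real (L2 p q r s t) = (L2_gen (of_real p) (of_real q) (of_real r) (of_real s) (of_real t) :: 'a)"
    and "of_real (D2 p q r s t) = (D2_gen (of_real p) (of_real q) (of_real r) (of_real s) (of_real t) :: 'a)"
    and "of_real (C21 p q r s t) = (C21_gen (of_real p) (of_real q) (of_real r) (of_real s) (of_real t) :: 'a)"
    and "of_real (C20 p q r s t) = (C20_gen (of_real p) (of_real q) (of_real r) (of_real s) (of_real t) :: 'a)"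
    and "of_real (C3 p q r s t) = (C3_gen (of_real p) (of_real q) (of_real r) (of_real s) (of_real t) :: 'a)"
  by (simp_all add: L1_def L1_gen_def L2_def L2_gen_def D2_def D2_gen_def
      C21_def C21_gen_def C20_def C20_gen_def C3_def C3_gen_def)

lemma monic_quintic_vieta:
  fixes x1 x2 x3 x4 x5 :: "'a::comm_ring_1"
  shows "[:t, s, r, q, p, 1:] = [:-x1,1:] * [:-x2,1:] * [:-x3,1:] * [:-x4,1:] * [:-x5,1:] \<longleftrightarrow>
      p = -(x1+x2+x3+x4+x5) \<and>
      q = x1*x2+x1*x3+x1*x4+x1*x5+x2*x3+x2*x4+x2*x5+x3*x4+x3*x5+x4*x5 \<and>
      r = -(x1*x2*x3+x1*x2*x4+x1*x2*x5+x1*x3*x4+x1*x3*x5+x1*x4*x5+x2*x3*x4+x2*x3*x5+x2*x4*x5+x3*x4*x5) \<and>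
      s = x1*x2*x3*x4+x1*x2*x3*x5+x1*x2*x4*x5+x1*x3*x4*x5+x2*x3*x4*x5 \<and>
      t = -(x1*x2*x3*x4*x5)"
proof -
  have "[:-x1,1:] * [:-x2,1:] * [:-x3,1:] * [:-x4,1:] * [:-x5,1:] =
     [:-(x1*x2*x3*x4*x5), x1*x2*x3*x4+x1*x2*x3*x5+x1*x2*x4*x5+x1*x3*x4*x5+x2*x3*x4*x5,
      -(x1*x2*x3+x1*x2*x4+x1*x2*x5+x1*x3*x4+x1*x3*x5+x1*x4*x5+x2*x3*x4+x2*x3*x5+x2*x4*x5+x3*x4*x5),
      x1*x2+x1*x3+x1*x4+x1*x5+x2*x3+x2*x4+x2*x5+x3*x4+x3*x5+x4*x5, -(x1+x2+x3+x4+x5), 1:]"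
    by (simp add: algebra_simps)
  then show ?thesis by auto
qed

lemma of_real_monic_quintic_factorization_iff:
  fixes x1 x2 x3 x4 x5 :: real
  shows "([:of_real t, of_real s, of_real r, of_real q, of_real p, 1:] :: 'a::{real_algebra_1,comm_ring_1} poly) =
      [:-of_real x1,1:] * [:-of_real x2,1:] * [:-of_real x3,1:] * [:-of_real x4,1:] * [:-of_real x5,1:] \<longleftrightarrow>
    [:t, s, r, q, p, 1:] = [:-x1,1:] * [:-x2,1:] * [:-x3,1:] * [:-x4,1:] * [:-x5,1:]"
  unfolding monic_quintic_vieta
  by (simp only: of_real_add[symmetric] of_real_mult[symmetric] of_real_minus[symmetric] of_real_eq_iff)

lemma L1_gen_double_root:
  fixes a b c e :: "'a::idom"
  assumes "[:t, s, r, q, p, 1:] = [:-a,1:]^2 * [:-b,1:] * [:-c,1:] * [:-e,1:]"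
  shows "L1_gen p q r s t = 2 * ((a-b)*(a-c)*(a-e)*(b-c)*(b-e)*(c-e))^2"
proof -
  from assms have "[:t, s, r, q, p, 1:] = [:-a,1:] * [:-a,1:] * [:-b,1:] * [:-c,1:] * [:-e,1:]"
    by (simp only: power2_eq_square)
  then show ?thesis
    unfolding monic_quintic_vieta L1_gen_def by (elim conjE) (hypsubst_thin, algebra)
qed

lemma D2_gen_triple_root:
  fixes a b c :: "'a::idom"
  assumes "[:t, s, r, q, p, 1:] = [:-a,1:]^3 * [:-b,1:] * [:-c,1:]"
  shows "D2_gen p q r s t = 0"
proof -
  from assms have "[:t, s, r, q, p, 1:] = [:-a,1:] * [:-a,1:] * [:-a,1:] * [:-b,1:] * [:-c,1:]"
    by (simp only: power3_eq_cube)
  then show ?thesis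
    unfolding monic_quintic_vieta D2_gen_def by (elim conjE) (hypsubst_thin, algebra)
qed

lemma two_double_roots_invariants:
  fixes a b e :: "'a::idom"
  assumes "[:t, s, r, q, p, 1:] = [:-e,1:] * [:-a,1:]^2 * [:-b,1:]^2"
  defines "K \<equiv> 4 * ((a-b)*(a-e)*(b-e))^2"
  shows "L2_gen p q r s t = K" and "C3_gen p q r s t = K * e"
    and "2 * C21_gen p q r s t = K * (a + b)" and "C20_gen p q r s t = K * (a * b)"
    and "4 * D2_gen p q r s t = K^2 * (a - b)^2"
proof -
  from assms(1) have "[:t, s, r, q, p, 1:] = [:-e,1:] * [:-a,1:] * [:-a,1:] * [:-b,1:] * [:-b,1:]"
    by (simp only: power2_eq_square mult.assoc)
  note coeffs = this[unfolded monic_quintic_vieta]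
  show "L2_gen p q r s t = K"
    using coeffs unfolding L2_gen_def K_def by (elim conjE) (hypsubst_thin, algebra)
  show "C3_gen p q r s t = K * e"
    using coeffs unfolding C3_gen_def K_def by (elim conjE) (hypsubst_thin, algebra)
  show "2 * C21_gen p q r s t = K * (a + b)"
    using coeffs unfolding C21_gen_def K_def by (elim conjE) (hypsubst_thin, algebra)
  show "C20_gen p q r s t = K * (a * b)"
    using coeffs unfolding C20_gen_def K_def by (elim conjE) (hypsubst_thin, algebra)
  show "4 * D2_gen p q r s t = K^2 * (a - b)^2"
    using coeffs unfolding D2_gen_def K_def by (elim conjE) (hypsubst_thin, algebra)
qed

lemma two_double_roots_if_L1_eq_0:
  fixes a b c e :: "'a::{idom,ring_char_0}"
  assumes f: "[:t, s, r, q, p, 1:] = [:-a,1:]^2 * [:-b,1:] * [:-c,1:] * [:-e,1:]"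
    and "L1_gen p q r s t = 0" and "D2_gen p q r s t \<noteq> 0"
  obtains w u v where "[:t, s, r, q, p, 1:] = [:-w,1:] * [:-u,1:]^2 * [:-v,1:]^2"
proof -
  have no_triple: "[:t, s, r, q, p, 1:] \<noteq> [:-x,1:]^3 * [:-y,1:] * [:-z,1:]" for x y z
    using D2_gen_triple_root assms(3) by blast
  have "(a-b)*(a-c)*(a-e)*(b-c)*(b-e)*(c-e) = 0"
    using L1_gen_double_root[OF f] assms(2) by simp
  then consider "b = a" | "c = a" | "e = a" | "c = b" | "e = b" | "e = c" by auto
  then show ?thesis
  proof cases
    case 1
    with f have "[:t, s, r, q, p, 1:] = [:-a,1:]^3 * [:-c,1:] * [:-e,1:]"
      by (simp only: power2_eq_square power3_eq_cube ac_simps)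
    with no_triple show ?thesis by blast
  next
    case 2
    with f have "[:t, s, r, q, p, 1:] = [:-a,1:]^3 * [:-b,1:] * [:-e,1:]"
      by (simp only: power2_eq_square power3_eq_cube ac_simps)
    with no_triple show ?thesis by blast
  next
    case 3
    with f have "[:t, s, r, q, p, 1:] = [:-a,1:]^3 * [:-b,1:] * [:-c,1:]"
      by (simp only: power2_eq_square power3_eq_cube ac_simps)
    with no_triple show ?thesis by blast
  next
    case 4 with f show ?thesis by (intro that[of e a b]) (simp only: power2_eq_square ac_simps)
  next
    case 5 with f show ?thesis by (intro that[of c a b]) (simp only: power2_eq_square ac_simps)
  next
    case 6 with f show ?thesis by (intro that[of b a c]) (simp only: power2_eq_square ac_simps)
  qed
qed

lemma complex_Reals_if_square_pos:
  fixes z :: complex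
  assumes "z^2 = of_real \<delta>" and "\<delta> > 0"
  shows "z \<in> \<real>"
proof -
  have "Im (z^2) = 0" and "Re (z^2) = \<delta>" unfolding assms(1) by simp_all
  then have im: "2 * Re z * Im z = 0" and re: "(Re z)^2 - (Im z)^2 = \<delta>"
    by (simp_all only: Im_power2 Re_power2)
  have "Im z = 0"
  proof (rule ccontr)
    assume "Im z \<noteq> 0"
    with im have "Re z = 0" by simp
    with re have "\<delta> = -((Im z)^2)" by simp
    with assms(2) show False by (simp add: not_less)
  qed
  then show ?thesis by (simp add: complex_is_Real_iff)
qed

lemma quintic_two_double_roots_real:
  fixes A B E :: complex
  assumes f: "[:of_real t, of_real s, of_real r, of_real q, of_real p, 1:] = [:-E,1:] * [:-A,1:]^2 * [:-B,1:]^2"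
    and L2: "L2 p q r s t \<noteq> 0" and D2: "D2 p q r s t > 0"
  obtains a b e :: real where "a < b" "quintic p q r s t = [:-e,1:] * [:-a,1:]^2 * [:-b,1:]^2"
proof -
  let ?l = "L2 p q r s t"
  define K where "K = 4 * ((A - B) * (A - E) * (B - E))^2"
  note inv = two_double_roots_invariants[OF f, folded of_real_invariants K_def]
  have "K \<noteq> 0" using L2 inv(1) by auto
  have E: "E = of_real (C3 p q r s t / ?l)"
    using \<open>K \<noteq> 0\<close> by (simp add: inv)
  have sum: "A + B = of_real (2 * C21 p q r s t / ?l)"
    using \<open>K \<noteq> 0\<close> by (simp add: inv)
  have sq: "(A - B)^2 = of_real (4 * D2 p q r s t / ?l^2)"
    using \<open>K \<noteq> 0\<close> by (simp add: inv)
  have "A - B \<in> \<real>"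
    using complex_Reals_if_square_pos[OF sq] L2 D2 by simp
  moreover have "A + B \<in> \<real>" by (simp add: sum)
  ultimately have "A \<in> \<real>" "B \<in> \<real>" by (auto simp: complex_is_Real_iff)
  then obtain a b e where abe: "A = of_real a" "B = of_real b" "E = of_real e"
    using E by (metis Reals_cases)
  have "a \<noteq> b" using sq L2 D2 by (auto simp: abe)
  have "([:of_real t, of_real s, of_real r, of_real q, of_real p, 1:] :: complex poly) =
      [:-of_real e,1:] * [:-of_real a,1:] * [:-of_real a,1:] * [:-of_real b,1:] * [:-of_real b,1:]"
    using f by (simp only: abe power2_eq_square mult.assoc)
  then have "[:t, s, r, q, p, 1:] = [:-e,1:] * [:-a,1:] * [:-a,1:] * [:-b,1:] * [:-b,1:]"
    by (simp only: of_real_monic_quintic_factorization_iff)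
  then have "quintic p q r s t = [:-e,1:] * [:-a,1:]^2 * [:-b,1:]^2"
    by (simp only: quintic_def power2_eq_square mult.assoc)
  then show ?thesis
    using \<open>a \<noteq> b\<close> that[of a b e] that[of b a e] by (metis linorder_neqE mult.commute mult.assoc)
qed

lemma quintic_two_real_double_roots:
  assumes "disc5 p q r s t = 0" and "L1 p q r s t = 0"
    and "L2 p q r s t \<noteq> 0" and "D2 p q r s t > 0"
  obtains a b e :: real where "a < b" "quintic p q r s t = [:-e,1:] * [:-a,1:]^2 * [:-b,1:]^2"
proof -
  obtain a b c e :: complex where
    "[:of_real t, of_real s, of_real r, of_real q, of_real p, 1:] = [:-a,1:]^2 * [:-b,1:] * [:-c,1:] * [:-e,1:]"
    using disc5_zero_double_root[OF assms(1)] .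
  moreover have "L1_gen (of_real p) (of_real q) (of_real r) (of_real s) (of_real t) = (0 :: complex)"
    and "D2_gen (of_real p) (of_real q) (of_real r) (of_real s) (of_real t) \<noteq> (0 :: complex)"
    using assms(2,4) by (simp_all flip: of_real_invariants)
  ultimately obtain E A B :: complex where
    "[:of_real t, of_real s, of_real r, of_real q, of_real p, 1:] = [:-E,1:] * [:-A,1:]^2 * [:-B,1:]^2"
    by (rule two_double_roots_if_L1_eq_0)
  then show ?thesis using assms(3,4) that by (rule quintic_two_double_roots_real)
qed

theorem mainTheorem11:
  fixes p q r s t :: real
  assumes "disc5 p q r s t = 0"
    and "L1 p q r s t = 0"
    and "L2 p q r s t \<noteq> 0"
    and "D2 p q r s t > 0"
  shows "let f = quintic p q r s t; l = L2 p q r s t; c21 = C21 p q r s t;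
             c20 = C20 p q r s t; c3 = C3 p q r s t; c = c3 / l;
             F4 = c3^2 / l^2 + c20 / l - 2 * c3 * c21 / l^2;
             F5 = (2 * c3 - 2 * c21) / l
         in \<exists>a b. a < b \<and> c \<noteq> a \<and> c \<noteq> b \<and>
              f = [:- c, 1:] * [:- a, 1:]^2 * [:- b, 1:]^2 \<and>
              (\<forall>x. l * x^2 - 2 * c21 * x + c20 = 0 \<longleftrightarrow> x = a \<or> x = b) \<and>
              (F4 > 0 \<and> F5 < 0 \<longrightarrow> c < a) \<and>
              (F4 < 0 \<longrightarrow> a < c \<and> c < b) \<and>
              (F4 > 0 \<and> F5 > 0 \<longrightarrow> b < c)"
proof -
  obtain a b e where "a < b" and f: "quintic p q r s t = [:-e,1:] * [:-a,1:]^2 * [:-b,1:]^2"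
    using quintic_two_real_double_roots[OF assms] .
  define K where "K = 4 * ((a - b) * (a - e) * (b - e))^2"
  note inv = two_double_roots_invariants[OF f[unfolded quintic_def],
      folded of_real_invariants[where 'a=real, unfolded of_real_eq_id id_def] K_def]
  have "K \<noteq> 0" using assms(3) inv(1) by simp
  then have "e \<noteq> a" "e \<noteq> b" by (auto simp: K_def)
  have c: "C3 p q r s t / L2 p q r s t = e" using \<open>K \<noteq> 0\<close> by (simp add: inv)
  have quad: "L2 p q r s t * x^2 - 2 * C21 p q r s t * x + C20 p q r s t = K * ((x - a) * (x - b))" for x
    by (simp add: inv algebra_simps power2_eq_square)
  have F4: "(C3 p q r s t)^2 / (L2 p q r s t)^2 + C20 p q r s t / L2 p q r s t
      - 2 * C3 p q r s t * C21 p q r s t / (L2 p q r s t)^2 = (e - a) * (e - b)"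
    using \<open>K \<noteq> 0\<close> by (simp add: inv field_simps power2_eq_square)
  have F5: "(2 * C3 p q r s t - 2 * C21 p q r s t) / L2 p q r s t = (e - a) + (e - b)"
    using \<open>K \<noteq> 0\<close> by (simp add: inv field_simps)
  show ?thesis
    unfolding Let_def c F4 F5
    using \<open>a < b\<close> \<open>e \<noteq> a\<close> \<open>e \<noteq> b\<close> \<open>K \<noteq> 0\<close> f quad
    by (intro exI[of _ a] exI[of _ b]) (auto simp: zero_less_mult_iff mult_less_0_iff)
qed

end
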